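(* Let $\mathcal{M}$ be a set of models, $c:\mathcal{M}\to(0,\infty)$ a cost function, $\mathcal{S}$ a step neighborhood function and $m_0\in\mathcal{M}$ a base model, as described in the context. Assume that $c(\cdot)$ is bounded, i.e. there is $c_{\max}\in\mathbb{R}$ with $0<c(m)\le c_{\max}$ for all $m\in\mathcal{M}$. (a) Let $m^+,m^-\in\mathcal{M}$ with $\mathcal{P}(m^+)\neq\emptyset$, and suppose that either $\mathcal{L}_{\mathrm{complexity}}(m^+)<\mathcal{L}_{\mathrm{complexity}}(m^-)$, or $\mathcal{L}_{\mathrm{complexity}}(m^+)=\mathcal{L}_{\mathrm{complexity}}(m^-)$ and $c(m^+)<c(m^-)$. Then $$\lim_{\gamma\to+\infty}\big(\mathcal{L}_\gamma(m^-)-\mathcal{L}_\gamma(m^+)\big)=+\infty.$$ (b) Let $\bm{m}^+,\bm{m}^-\in\mathcal{P}$ be interpretable paths with $\bm{c}(\bm{m}^+)\preceq\bm{c}(\bm{m}^-)$, where $\preceq$ is the lexicographic order on $\mathbb{R}^{\mathbb{N}}$. Then $$\lim_{\gamma\to 0}\big(\mathcal{L}_\gamma(\bm{m}^-)-\mathcal{L}_\gamma(\bm{m}^+)\big)\ge 0.$$ Consequently, given models $m^+,m^-\in\mathcal{M}$, if there exists $\bm{m}^+\in\mathcal{P}(m^+)$ such that $\bm{c}(\bm{m}^+)\preceq\bm{c}(\bm{m}^-)$ for all $\bm{m}^-\in\mathcal{P}(m^-)$, then $$\lim_{\gamma\to 0}\big(\mathcal{L}_\gamma(m^-)-\mathcal{L}_\gamma(m^+)\big)\ge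 0.$$
   Context: Setting: $\mathcal{M}$ is a set (of models), $c:\mathcal{M}\to(0,\infty)$ is a cost function, and $\mathcal{S}:\mathcal{M}\to 2^{\mathcal{M}}$ is a step neighborhood function with $\mathcal{S}(m)\neq\emptyset$ for all $m$; $m'$ is "one interpretable step from $m$" iff $m'\in\mathcal{S}(m)$. A fixed base model $m_0\in\mathcal{M}$ is given. An interpretable path of length $K\ge 0$ is a sequence $\bm{m}=(m_1,\dots,m_K)$ of models with $m_k\in\mathcal{S}(m_{k-1})$ for $1\le k\le K$ (starting from $m_0$); its length is $|\bm{m}|=K$, and its final model is $m_K$ (the final model of the length-$0$ path is $m_0$). $\mathcal{P}_K$ is the set of paths of length $K$, $\mathcal{P}=\bigcup_{K\ge0}\mathcal{P}_K$, $\mathcal{P}_K(m)=\{\bm{m}\in\mathcal{P}_K: m_K=m\}$ and $\mathcal{P}(m)=\bigcup_{K\ge0}\mathcal{P}_K(m)$. The model complexity is $\mathcal{L}_{\mathrm{complexity}}(m)=\min_{\bm{m}\in\mathcal{P}(m)}|\bm{m}|$ (equal to $\infty$ if $\mathcal{P}(m)=\emptyset$). The cost sequence of a path $\bm{m}\in\mathcal{P}_K$ is the infinite sequence $\bm{c}(\bm{m})=(c_1,c_2,\dots)$ with $c_k=c(m_k)$ for $k\le K$ and $c_k=0$ for $k>K$. For $\gamma>0$, the path interpretability loss is $\mathcal{L}_\gamma(\bm{m})=\sum_{k=1}^{|\bm{m}|}\gamma^k c(m_k)$, and the model interpretability loss is $\mathcal{L}_\gamma(m)=\infty$ if $\mathcal{P}(m)=\emptyset$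 and $\mathcal{L}_\gamma(m)=\inf_{\bm{m}\in\mathcal{P}(m)}\mathcal{L}_\gamma(\bm{m})$ otherwise. *)

theory Defs
  imports Complex_Main "HOL-Library.Extended_Real"
begin

text \<open>Models form the type 'm (the set M). A path (m_1,...,m_K) is a list;
  it is an interpretable path from the base model m0 if each model is one step
  from its predecessor (m_0 = m0).\<close>

fun is_path_from :: "('m \<Rightarrow> 'm set) \<Rightarrow> 'm \<Rightarrow> 'm list \<Rightarrow> bool" where
  "is_path_from S m [] = True"
| "is_path_from S m (x # xs) = (x \<in> S m \<and> is_path_from S x xs)"

definition final_model :: "'m \<Rightarrow> 'm list \<Rightarrow> 'm" where
  "final_model m0 ms = last (m0 # ms)"

definition paths :: "('m \<Rightarrow> 'm set) \<Rightarrow> 'm \<Rightarrow> 'm list set" where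
  "paths S m0 = {ms. is_path_from S m0 ms}"

definition paths_to :: "('m \<Rightarrow> 'm set) \<Rightarrow> 'm \<Rightarrow> 'm \<Rightarrow> 'm list set" where
  "paths_to S m0 m = {ms \<in> paths S m0. final_model m0 ms = m}"

text \<open>Model complexity (infinity if no path reaches m).\<close>
definition complexity :: "('m \<Rightarrow> 'm set) \<Rightarrow> 'm \<Rightarrow> 'm \<Rightarrow> enat" where
  "complexity S m0 m = (INF ms\<in>paths_to S m0 m. enat (length ms))"

text \<open>Cost sequence c(ms) = (c_1, c_2, ...), indexed from 1; index 0 is a dummy 0
  (it does not affect the lexicographic comparison).\<close>
definition cost_seq :: "('m \<Rightarrow> real) \<Rightarrow> 'm list \<Rightarrow> nat \<Rightarrow> real" where
  "cost_seq c ms k = (if 1 \<le> k \<and> k \<le> length ms then c (ms ! (k - 1)) else 0)"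

definition lex_le :: "(nat \<Rightarrow> real) \<Rightarrow> (nat \<Rightarrow> real) \<Rightarrow> bool" where
  "lex_le x y \<longleftrightarrow> x = y \<or> (\<exists>n. (\<forall>k<n. x k = y k) \<and> x n < y n)"

definition path_loss :: "('m \<Rightarrow> real) \<Rightarrow> real \<Rightarrow> 'm list \<Rightarrow> real" where
  "path_loss c \<gamma> ms = (\<Sum>k=1..length ms. \<gamma> ^ k * c (ms ! (k - 1)))"

text \<open>Model interpretability loss (infinity if no path reaches m).\<close>
definition model_loss :: "('m \<Rightarrow> 'm set) \<Rightarrow> ('m \<Rightarrow> real) \<Rightarrow> 'm \<Rightarrow> real \<Rightarrow> 'm \<Rightarrow> ereal" where
  "model_loss S c m0 \<gamma> m = (INF ms\<in>paths_to S m0 m. ereal (path_loss c \<gamma> ms))"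

end

theory Submission
  imports Defs
begin

text \<open>As \<open>\<gamma> \<rightarrow> \<infinity>\<close> the loss of a path of length \<open>K\<close> is dominated by its last term
  \<open>\<gamma>\<^sup>K c(m\<^sub>K)\<close>, the earlier terms being \<open>O(\<gamma>\<^sup>K\<^sup>-\<^sup>1)\<close> because \<open>c\<close> is bounded. Hence
  the model loss of a model of complexity \<open>K\<close> is at least \<open>\<gamma>\<^sup>K c(m)\<close>, and at most the loss
  of a shortest path to it, i.e. \<open>\<gamma>\<^sup>K c(m) + O(\<gamma>\<^sup>K\<^sup>-\<^sup>1)\<close>. If \<open>m\<^sup>-\<close> has larger
  complexity than \<open>m\<^sup>+\<close>, or equal complexity and larger cost, the difference of the
  two losses is at least \<open>\<gamma>\<^sup>n (d\<gamma> - C)\<close> for some \<open>d > 0\<close>.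

  As \<open>\<gamma> \<rightarrow> 0\<close> every path loss is a polynomial in \<open>\<gamma>\<close> without constant term, so it tends
  to \<open>0\<close>, and the model loss of a reachable model is squeezed between \<open>0\<close> and such a path
  loss.\<close>

lemma path_loss_nonneg:
  assumes "\<And>m. 0 \<le> c m" and "0 \<le> \<gamma>"
  shows "0 \<le> path_loss c \<gamma> ms"
  unfolding path_loss_def using assms by (intro sum_nonneg) simp

lemma path_loss_snoc:
  "path_loss c \<gamma> (xs @ [x]) = path_loss c \<gamma> xs + \<gamma> ^ Suc (length xs) * c x"
  unfolding path_loss_def by (simp add: nth_append) (intro sum.cong; auto)

lemma path_loss_le_length_power:
  assumes c_bdd: "\<And>m. c m \<le> cmax" and "0 \<le> cmax" and "1 \<le> \<gamma>"
  shows "path_loss c \<gamma> ms \<le> real (length ms) * \<gamma> ^ length ms * cmax"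
proof -
  have "path_loss c \<gamma> ms \<le> (\<Sum>k=1..length ms. \<gamma> ^ length ms * cmax)"
    unfolding path_loss_def
  proof (rule sum_mono)
    fix k assume "k \<in> {1..length ms}"
    then have "\<gamma> ^ k \<le> \<gamma> ^ length ms"
      using \<open>1 \<le> \<gamma>\<close> by (intro power_increasing) auto
    then show "\<gamma> ^ k * c (ms ! (k - 1)) \<le> \<gamma> ^ length ms * cmax"
      using \<open>1 \<le> \<gamma>\<close> \<open>0 \<le> cmax\<close> c_bdd
      by (intro order_trans[OF mult_left_mono mult_right_mono]) auto
  qed
  then show ?thesis by simp
qed

lemma path_loss_tendsto_0: "((\<lambda>\<gamma>. path_loss c \<gamma> ms) \<longlongrightarrow> 0) (at 0 within A)"
proof -
  have "((\<lambda>\<gamma>. path_loss c \<gamma> ms) \<longlongrightarrow> path_loss c 0 ms) (at 0 within A)"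
    unfolding path_loss_def by (intro tendsto_intros)
  moreover have "path_loss c 0 ms = 0"
    unfolding path_loss_def by (intro sum.neutral) auto
  ultimately show ?thesis by simp
qed

lemma final_model_snoc: "final_model m0 (xs @ [x]) = x"
  unfolding final_model_def by simp

lemma complexity_le_length: "ms \<in> paths_to S m0 m \<Longrightarrow> complexity S m0 m \<le> enat (length ms)"
  unfolding complexity_def by (rule INF_lower)

lemma complexity_attained:
  assumes "paths_to S m0 m \<noteq> {}"
  obtains ms where "ms \<in> paths_to S m0 m" and "complexity S m0 m = enat (length ms)"
proof -
  have "(INF ms\<in>paths_to S m0 m. enat (length ms)) \<in> (\<lambda>ms. enat (length ms)) ` paths_to S m0 m"
    using assms unfolding Inf_enat_def by (auto intro: LeastI)
  then show ?thesis using that unfolding complexity_def by blast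
qed

lemma complexity_eq_0_imp_base:
  assumes "complexity S m0 m = 0"
  shows "m = m0"
proof -
  have "paths_to S m0 m \<noteq> {}"
    using assms unfolding complexity_def by (auto simp: top_enat_def)
  then obtain ms where "ms \<in> paths_to S m0 m" and "complexity S m0 m = enat (length ms)"
    by (rule complexity_attained)
  with assms show ?thesis
    by (simp add: paths_to_def final_model_def zero_enat_def)
qed

lemma model_loss_le_path_loss:
  "ms \<in> paths_to S m0 m \<Longrightarrow> model_loss S c m0 \<gamma> m \<le> ereal (path_loss c \<gamma> ms)"
  unfolding model_loss_def by (rule INF_lower)

lemma model_loss_nonneg:
  assumes "\<And>m. 0 \<le> c m" and "0 \<le> \<gamma>"
  shows "0 \<le> model_loss S c m0 \<gamma> m"
  unfolding model_loss_def using path_loss_nonneg[OF assms] by (intro INF_greatest) simp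

lemma model_loss_unreachable: "paths_to S m0 m = {} \<Longrightarrow> model_loss S c m0 \<gamma> m = \<infinity>"
  unfolding model_loss_def by (simp add: top_ereal_def)

lemma model_loss_ge_power:
  assumes c_nonneg: "\<And>m. 0 \<le> c m" and "1 \<le> \<gamma>"
    and "enat (Suc n) \<le> complexity S m0 m"
  shows "ereal (\<gamma> ^ Suc n * c m) \<le> model_loss S c m0 \<gamma> m"
  unfolding model_loss_def
proof (rule INF_greatest)
  fix ms assume ms: "ms \<in> paths_to S m0 m"
  then have "Suc n \<le> length ms"
    using assms(3) complexity_le_length[OF ms] by (metis enat_ord_simps(1) order_trans)
  then obtain xs x where ms_eq: "ms = xs @ [x]" and len: "Suc n \<le> Suc (length xs)"
    by (cases ms rule: rev_cases) auto
  have "x = m"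
    using ms unfolding ms_eq paths_to_def by (simp add: final_model_snoc)
  have "\<gamma> ^ Suc n * c m \<le> \<gamma> ^ Suc (length xs) * c m"
    using \<open>1 \<le> \<gamma>\<close> len c_nonneg by (intro mult_right_mono power_increasing) auto
  also have "\<dots> \<le> path_loss c \<gamma> ms"
    using path_loss_nonneg[OF c_nonneg, where \<gamma>=\<gamma> and ms=xs] \<open>1 \<le> \<gamma>\<close> \<open>x = m\<close>
    by (simp add: ms_eq path_loss_snoc)
  finally show "ereal (\<gamma> ^ Suc n * c m) \<le> ereal (path_loss c \<gamma> ms)" by simp
qed

lemma power_diff_tendsto_at_top:
  fixes d C :: real
  assumes "0 < d"
  shows "filterlim (\<lambda>\<gamma>. \<gamma> ^ Suc n * d - \<gamma> ^ n * C) at_top at_top"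
proof (rule filterlim_at_top_mono)
  have "filterlim (\<lambda>\<gamma>::real. - C + d * \<gamma>) at_top at_top"
    by (rule filterlim_tendsto_add_at_top[OF tendsto_const
          filterlim_tendsto_pos_mult_at_top[OF tendsto_const assms filterlim_ident]])
  then show "filterlim (\<lambda>\<gamma>::real. d * \<gamma> - C) at_top at_top" by simp
  have "\<forall>\<^sub>F \<gamma> in at_top. max 1 (C / d) \<le> (\<gamma>::real)" by (rule eventually_ge_at_top)
  then show "\<forall>\<^sub>F \<gamma> in at_top. d * \<gamma> - C \<le> \<gamma> ^ Suc n * d - \<gamma> ^ n * C"
  proof eventually_elim
    case (elim \<gamma>)
    then have "C \<le> \<gamma> * d" and "1 \<le> \<gamma> ^ n"
      using pos_divide_le_eq[OF assms] by simp_all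
    then have "1 * (d * \<gamma> - C) \<le> \<gamma> ^ n * (d * \<gamma> - C)"
      by (intro mult_right_mono) (simp_all add: mult.commute)
    then show ?case by (simp add: algebra_simps)
  qed
qed

lemma ereal_diff_tendsto_PInfty:
  fixes A B :: "'a \<Rightarrow> ereal"
  assumes "filterlim (\<lambda>x. f x - h x) at_top F"
    and "\<forall>\<^sub>F x in F. ereal (f x) \<le> A x" and "\<forall>\<^sub>F x in F. B x \<le> ereal (h x)"
  shows "((\<lambda>x. A x - B x) \<longlongrightarrow> \<infinity>) F"
  unfolding tendsto_PInfty
proof
  fix r
  have "\<forall>\<^sub>F x in F. r < f x - h x"
    using assms(1) by (simp add: filterlim_at_top_dense)
  with assms(2,3) show "\<forall>\<^sub>F x in F. ereal r < A x - B x"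
  proof eventually_elim
    case (elim x)
    then have "ereal (f x) - ereal (h x) \<le> A x - B x" by (intro ereal_minus_mono)
    moreover have "ereal r < ereal (f x) - ereal (h x)" using elim by simp
    ultimately show ?case by order
  qed
qed

lemma model_loss_diff_tendsto_PInfty_if_shorter:
  assumes c_nonneg: "\<And>m. 0 \<le> c m" and c_bdd: "\<And>m. c m \<le> cmax" and "0 < c mm"
    and p: "p \<in> paths_to S m0 mp" and shorter: "enat (length p) < complexity S m0 mm"
  shows "((\<lambda>\<gamma>. model_loss S c m0 \<gamma> mm - model_loss S c m0 \<gamma> mp) \<longlongrightarrow> \<infinity>) at_top"
proof (rule ereal_diff_tendsto_PInfty)
  let ?n = "length p"
  have "0 \<le> cmax" using c_nonneg c_bdd by (meson order_trans)
  have longer: "enat (Suc ?n) \<le> complexity S m0 mm"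
    using shorter by (simp add: Suc_ile_eq)
  show "\<forall>\<^sub>F \<gamma> in at_top. ereal (\<gamma> ^ Suc ?n * c mm) \<le> model_loss S c m0 \<gamma> mm"
    using eventually_ge_at_top[of "1::real"]
    by eventually_elim (rule model_loss_ge_power[OF c_nonneg _ longer])
  show "filterlim (\<lambda>\<gamma>. \<gamma> ^ Suc ?n * c mm - \<gamma> ^ ?n * (?n * cmax)) at_top at_top"
    using \<open>0 < c mm\<close> by (rule power_diff_tendsto_at_top)
  show "\<forall>\<^sub>F \<gamma> in at_top. model_loss S c m0 \<gamma> mp \<le> ereal (\<gamma> ^ ?n * (?n * cmax))"
    using eventually_ge_at_top[of "1::real"]
  proof eventually_elim
    case (elim \<gamma>)
    have "model_loss S c m0 \<gamma> mp \<le> ereal (path_loss c \<gamma> p)"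
      by (rule model_loss_le_path_loss[OF p])
    also have "path_loss c \<gamma> p \<le> \<gamma> ^ ?n * (?n * cmax)"
      using path_loss_le_length_power[OF c_bdd \<open>0 \<le> cmax\<close> elim] by (simp add: algebra_simps)
    finally show ?case by simp
  qed
qed

lemma model_loss_diff_tendsto_PInfty_if_cheaper_end:
  assumes c_nonneg: "\<And>m. 0 \<le> c m" and c_bdd: "\<And>m. c m \<le> cmax" and "c mp < c mm"
    and p: "xs @ [mp] \<in> paths_to S m0 mp"
    and not_longer: "enat (Suc (length xs)) \<le> complexity S m0 mm"
  shows "((\<lambda>\<gamma>. model_loss S c m0 \<gamma> mm - model_loss S c m0 \<gamma> mp) \<longlongrightarrow> \<infinity>) at_top"
proof (rule ereal_diff_tendsto_PInfty)
  let ?n = "length xs"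
  have "0 \<le> cmax" using c_nonneg c_bdd by (meson order_trans)
  show "\<forall>\<^sub>F \<gamma> in at_top. ereal (\<gamma> ^ Suc ?n * c mm) \<le> model_loss S c m0 \<gamma> mm"
    using eventually_ge_at_top[of "1::real"]
    by eventually_elim (rule model_loss_ge_power[OF c_nonneg _ not_longer])
  have "filterlim (\<lambda>\<gamma>. \<gamma> ^ Suc ?n * (c mm - c mp) - \<gamma> ^ ?n * (?n * cmax)) at_top at_top"
    using \<open>c mp < c mm\<close> by (intro power_diff_tendsto_at_top) simp
  then show "filterlim (\<lambda>\<gamma>. \<gamma> ^ Suc ?n * c mm - (\<gamma> ^ Suc ?n * c mp + \<gamma> ^ ?n * (?n * cmax)))
      at_top at_top"
    by (simp add: algebra_simps)
  show "\<forall>\<^sub>F \<gamma> in at_top. model_loss S c m0 \<gamma> mp \<le> ereal (\<gamma> ^ Suc ?n * c mp + \<gamma> ^ ?n * (?n * cmax))"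
    using eventually_ge_at_top[of "1::real"]
  proof eventually_elim
    case (elim \<gamma>)
    have "model_loss S c m0 \<gamma> mp \<le> ereal (path_loss c \<gamma> (xs @ [mp]))"
      by (rule model_loss_le_path_loss[OF p])
    also have "path_loss c \<gamma> (xs @ [mp]) \<le> \<gamma> ^ Suc ?n * c mp + \<gamma> ^ ?n * (?n * cmax)"
      using path_loss_le_length_power[OF c_bdd \<open>0 \<le> cmax\<close> elim, where ms=xs]
      by (simp add: path_loss_snoc algebra_simps)
    finally show ?case by simp
  qed
qed

lemma model_loss_diff_tendsto_PInfty:
  assumes c_nonneg: "\<And>m. 0 \<le> c m" and c_bdd: "\<And>m. c m \<le> cmax" and "0 < c mm"
    and reachable: "paths_to S m0 mp \<noteq> {}"
    and order: "complexity S m0 mp < complexity S m0 mm \<or>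
      (complexity S m0 mp = complexity S m0 mm \<and> c mp < c mm)"
  shows "((\<lambda>\<gamma>. model_loss S c m0 \<gamma> mm - model_loss S c m0 \<gamma> mp) \<longlongrightarrow> \<infinity>) at_top"
proof -
  from reachable obtain p where p: "p \<in> paths_to S m0 mp"
    and Kp: "complexity S m0 mp = enat (length p)"
    by (rule complexity_attained)
  show ?thesis
  proof (cases "complexity S m0 mp < complexity S m0 mm")
    case True
    with p Kp show ?thesis
      by (intro model_loss_diff_tendsto_PInfty_if_shorter[where c=c and cmax=cmax,
            OF c_nonneg c_bdd \<open>0 < c mm\<close>]) auto
  next
    case False
    with order Kp have eq: "complexity S m0 mm = enat (length p)" and "c mp < c mm" by auto
    have "p \<noteq> []"
    proof
      assume "p = []"
      with eq Kp have "complexity S m0 mm = 0" and "complexity S m0 mp = 0"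
        by (simp_all add: zero_enat_def)
      then have "mm = m0" and "mp = m0" by (auto dest: complexity_eq_0_imp_base)
      with \<open>c mp < c mm\<close> show False by simp
    qed
    then obtain xs where "p = xs @ [mp]"
      using p by (cases p rule: rev_cases) (auto simp: paths_to_def final_model_snoc)
    with p eq \<open>c mp < c mm\<close> show ?thesis
      by (intro model_loss_diff_tendsto_PInfty_if_cheaper_end[where c=c and cmax=cmax,
            OF c_nonneg c_bdd]) auto
  qed
qed

lemma model_loss_tendsto_0:
  assumes "\<And>m. 0 \<le> c m" and "p \<in> paths_to S m0 m"
  shows "((\<lambda>\<gamma>. model_loss S c m0 \<gamma> m) \<longlongrightarrow> 0) (at_right 0)"
proof (rule tendsto_sandwich[OF _ _ tendsto_const])
  show "((\<lambda>\<gamma>. ereal (path_loss c \<gamma> p)) \<longlongrightarrow> 0) (at_right 0)"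
    using tendsto_ereal[OF path_loss_tendsto_0] by (simp add: zero_ereal_def)
  show "\<forall>\<^sub>F \<gamma> in at_right 0. 0 \<le> model_loss S c m0 \<gamma> m"
    using eventually_at_right_less[of 0]
    by eventually_elim (simp add: model_loss_nonneg[OF assms(1)])
  show "\<forall>\<^sub>F \<gamma> in at_right 0. model_loss S c m0 \<gamma> m \<le> ereal (path_loss c \<gamma> p)"
    using model_loss_le_path_loss[OF assms(2)] by simp
qed

lemma model_loss_diff_tendsto_nonneg_at_right_0:
  assumes c_nonneg: "\<And>m. 0 \<le> c m" and p: "p \<in> paths_to S m0 mp"
  shows "\<exists>L. ((\<lambda>\<gamma>. model_loss S c m0 \<gamma> mm - model_loss S c m0 \<gamma> mp) \<longlongrightarrow> L) (at_right 0) \<and> 0 \<le> L"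
proof (cases "paths_to S m0 mm = {}")
  case True
  have "\<forall>\<^sub>F \<gamma> in at_right 0. \<infinity> = model_loss S c m0 \<gamma> mm - model_loss S c m0 \<gamma> mp"
    using model_loss_le_path_loss[OF p] by (simp add: model_loss_unreachable[OF True])
  then have "((\<lambda>\<gamma>. model_loss S c m0 \<gamma> mm - model_loss S c m0 \<gamma> mp) \<longlongrightarrow> \<infinity>) (at_right 0)"
    by (rule Lim_transform_eventually[OF tendsto_const])
  then show ?thesis by (intro exI[of _ \<infinity>]) simp
next
  case False
  then obtain q where q: "q \<in> paths_to S m0 mm" by blast
  have "((\<lambda>\<gamma>. model_loss S c m0 \<gamma> mm - model_loss S c m0 \<gamma> mp) \<longlongrightarrow> 0 - 0) (at_right 0)"
    using model_loss_tendsto_0[OF c_nonneg q] model_loss_tendsto_0[OF c_nonneg p]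
    by (intro tendsto_diff_ereal) simp_all
  then show ?thesis by (intro exI[of _ 0]) simp
qed

theorem theorem1:
  fixes c :: "'m \<Rightarrow> real" and S :: "'m \<Rightarrow> 'm set" and m0 :: 'm and cmax :: real
  assumes S_ne: "\<And>m. S m \<noteq> {}"
    and c_pos: "\<And>m. 0 < c m"
    and c_bdd: "\<And>m. c m \<le> cmax"
  shows
    "(\<forall>mp mm. paths_to S m0 mp \<noteq> {} \<and>
        (complexity S m0 mp < complexity S m0 mm \<or>
         (complexity S m0 mp = complexity S m0 mm \<and> c mp < c mm)) \<longrightarrow>
        ((\<lambda>\<gamma>. model_loss S c m0 \<gamma> mm - model_loss S c m0 \<gamma> mp) \<longlongrightarrow> \<infinity>) at_top)
   \<and> (\<forall>p q. p \<in> paths S m0 \<and> q \<in> paths S m0 \<and> lex_le (cost_seq c p) (cost_seq c q) \<longrightarrow>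
        (\<exists>L::real. ((\<lambda>\<gamma>. path_loss c \<gamma> q - path_loss c \<gamma> p) \<longlongrightarrow> L) (at_right 0) \<and> L \<ge> 0))
   \<and> (\<forall>mp mm. (\<exists>p \<in> paths_to S m0 mp. \<forall>q \<in> paths_to S m0 mm. lex_le (cost_seq c p) (cost_seq c q)) \<longrightarrow>
        (\<exists>L::ereal. ((\<lambda>\<gamma>. model_loss S c m0 \<gamma> mm - model_loss S c m0 \<gamma> mp) \<longlongrightarrow> L) (at_right 0) \<and> L \<ge> 0))"
proof -
  have c_nonneg: "\<And>m. 0 \<le> c m" using c_pos by (simp add: less_imp_le)
  show ?thesis
  proof (intro conjI allI impI)
    fix mp mm
    assume "paths_to S m0 mp \<noteq> {} \<and> (complexity S m0 mp < complexity S m0 mm \<or>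
      (complexity S m0 mp = complexity S m0 mm \<and> c mp < c mm))"
    then show "((\<lambda>\<gamma>. model_loss S c m0 \<gamma> mm - model_loss S c m0 \<gamma> mp) \<longlongrightarrow> \<infinity>) at_top"
      by (elim conjE)
        (rule model_loss_diff_tendsto_PInfty[where c=c and cmax=cmax, OF c_nonneg c_bdd c_pos])
  next
    fix p q :: "'m list"
    have "((\<lambda>\<gamma>. path_loss c \<gamma> q - path_loss c \<gamma> p) \<longlongrightarrow> 0 - 0) (at_right 0)"
      by (intro tendsto_diff path_loss_tendsto_0)
    then show "\<exists>L::real. ((\<lambda>\<gamma>. path_loss c \<gamma> q - path_loss c \<gamma> p) \<longlongrightarrow> L) (at_right 0) \<and> L \<ge> 0"
      by (intro exI[of _ 0]) simp
  next
    fix mp mm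
    assume "\<exists>p \<in> paths_to S m0 mp. \<forall>q \<in> paths_to S m0 mm. lex_le (cost_seq c p) (cost_seq c q)"
    then obtain p where "p \<in> paths_to S m0 mp" by blast
    then show "\<exists>L::ereal. ((\<lambda>\<gamma>. model_loss S c m0 \<gamma> mm - model_loss S c m0 \<gamma> mp) \<longlongrightarrow> L)
        (at_right 0) \<and> L \<ge> 0"
      by (rule model_loss_diff_tendsto_nonneg_at_right_0[OF c_nonneg])
  qed
qed

end
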